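(* Let $\mathcal{T}_0$ be the caterpillar tree with $n\ge 3$ leaves labelled $1,\dots,n$ in order along its spine, and let $P_{\mathcal{T}_0}$ be as in the context. The minimal generators of $P_{\mathcal{T}_0}$ are exactly the elements $w_{i,j,k}$, $1\le i<j<k\le n$, where $w_{i,j,k}$ is the minimal generator of $P_{\mathcal{T}_0}$ whose support is the subtree spanned by the leaves $i,j,k$. Moreover, the kernel $I_{\mathcal{T}_0}$ of the surjection $\mathbb{C}[w_{i,j,k}: i<j<k]\to\mathbb{C}[P_{\mathcal{T}_0}]$ equals the ideal $J_{3,n}$ generated by all binomials $w_{i,j,k}w_{r,s,t}-w_{(i,j,k)\wedge(r,s,t)}\,w_{(i,j,k)\vee(r,s,t)}$, where $(i,j,k)\wedge(r,s,t)=(\min(i,r),\min(j,s),\min(k,t))$ and $(i,j,k)\vee(r,s,t)=(\max(i,r),\max(j,s),\max(k,t))$.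
   Context: A Berenstein–Zelevinsky (BZ) triangle for $sl_3(\mathbb{C})$ is a $9$-tuple of nonnegative integers $(a,b,c,d,e,f,g,h,i)$ placed on the vertices of a triangular diagram with rows $a$; $b\ c$; $d\ e$; $f\ g\ h\ i$; the sides, oriented counterclockwise, read side 1 $=(a,b,d,f)$, side 2 $=(f,g,h,i)$, side 3 $=(i,e,c,a)$; the entries satisfy $b+c=g+h$, $c+e=d+g$, $e+h=b+d$. The boundary weight of a side $(x_1,x_2,x_3,x_4)$ is $(x_1+x_2)\omega_1+(x_3+x_4)\omega_2$ ($\omega_1,\omega_2$ the fundamental weights of $sl_3(\mathbb{C})$), identified with $(x_1+x_2,x_3+x_4)$. For a tree $\mathcal{T}$ whose non-leaf vertices have degree $3$ and leaves labelled $1,\dots,n$, attach a BZ triangle to each non-leaf vertex with a fixed bijection between its sides (counterclockwise) and the incident edges. $Q_{\mathcal{T}}(sl_3(\mathbb{C}))$ is the semigroup (entrywise addition) of such assignments such that for each edge joining non-leaf vertices $v,v'$, if $v$'s side on it has boundary weight $(p,q)$ then $v'$'s side on it has $(q,p)$; $\pi_{\mathcal{T}}(w)$ records at each leaf the boundary weight on its leaf edge; the support of $w$ is the set of edges with nonzero boundary weight. $P_{\mathcal{T}}$ is the subsemigroup of $w$ with every component of $\pi_{\mathcal{T}}(w)$ a nonnegative multiple of $\omega_1$. The caterpillar tree $\mathcal{T}_0$ has non-leaf vertices $v_1,\dots,v_{n-2}$ forming a path (the spine), with leaves $1,2$ attached to $v_1$, leaf $i$ attached to $v_{i-1}$ for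 $3\le i\le n-2$, and leaves $n-1,n$ attached to $v_{n-2}$. *)

theory Defs
  imports Complex_Main "HOL-Library.Multiset" "HOL-Library.Poly_Mapping"
begin

text \<open>An assignment w gives, for every non-leaf vertex v_m (m in 1..n-2) of the
caterpillar, a BZ triangle (a,b,c,d,e,f,g,h,i) stored as w m 0 = a, w m 1 = b,
w m 2 = c, w m 3 = d, w m 4 = e, w m 5 = f, w m 6 = g, w m 7 = h, w m 8 = i.\<close>

type_synonym asg = "nat \<Rightarrow> nat \<Rightarrow> nat"

definition zero_asg :: asg where "zero_asg = (\<lambda>m p. 0)"
definition add_asg :: "asg \<Rightarrow> asg \<Rightarrow> asg" where
  "add_asg u v = (\<lambda>m p. u m p + v m p)"

definition is_BZ :: "(nat \<Rightarrow> nat) \<Rightarrow> bool" where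
  "is_BZ t \<longleftrightarrow> t 1 + t 2 = t 6 + t 7 \<and> t 2 + t 4 = t 3 + t 6 \<and> t 4 + t 7 = t 1 + t 3"

text \<open>Side s (s = 1,2,3) as a 4-tuple of positions:
 side 1 = (a,b,d,f), side 2 = (f,g,h,i), side 3 = (i,e,c,a).\<close>
fun side_pos :: "nat \<Rightarrow> nat \<times> nat \<times> nat \<times> nat" where
  "side_pos s = (if s = 1 then (0,1,3,5) else if s = 2 then (5,6,7,8) else (8,4,2,0))"

text \<open>Boundary weight (x1+x2, x3+x4), identified with (x1+x2) w1 + (x3+x4) w2.\<close>
definition bweight :: "(nat \<Rightarrow> nat) \<Rightarrow> nat \<Rightarrow> nat \<times> nat" where
  "bweight t s = (case side_pos s of (p1,p2,p3,p4) \<Rightarrow> (t p1 + t p2, t p3 + t p4))"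

text \<open>Edges of the caterpillar: leaf edges and spine edges Spine m joining v_m and v_(m+1).\<close>
datatype edge = Leaf nat | Spine nat

text \<open>Fixed bijection between the sides (counterclockwise) of the triangle at v_m and
its incident edges, compatible with the planar embedding in which leaves 1,...,n
appear in counterclockwise order: v_1 has sides (leaf 1, leaf 2, spine),
v_m (middle) has (spine m-1, leaf m+1, spine m), v_(n-2) has (spine, leaf n-1, leaf n).\<close>
definition side_edge :: "nat \<Rightarrow> nat \<Rightarrow> nat \<Rightarrow> edge" where
  "side_edge n m s =
     (if s = 1 then (if m = 1 then Leaf 1 else Spine (m - 1))
      else if s = 2 then Leaf (m + 1)
      else (if m = n - 2 then Leaf n else Spine m))"

definition swap :: "nat \<times> nat \<Rightarrow> nat \<times> nat" where "swap x = (snd x, fst x)"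

definition Q_cat :: "nat \<Rightarrow> asg set" where
  "Q_cat n = {w. (\<forall>m p. (m < 1 \<or> m > n - 2 \<or> p \<ge> 9) \<longrightarrow> w m p = 0)
              \<and> (\<forall>m. 1 \<le> m \<and> m \<le> n - 2 \<longrightarrow> is_BZ (w m))
              \<and> (\<forall>m. 1 \<le> m \<and> m \<le> n - 3 \<longrightarrow> bweight (w (m + 1)) 1 = swap (bweight (w m) 3))}"

text \<open>P_T0: every leaf weight is a nonnegative multiple of omega_1.\<close>
definition P_cat :: "nat \<Rightarrow> asg set" where
  "P_cat n = {w \<in> Q_cat n. \<forall>m s l. 1 \<le> m \<and> m \<le> n - 2 \<and> s \<in> {1,2,3} \<and> side_edge n m s = Leaf l
                \<longrightarrow> snd (bweight (w m) s) = 0}"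

definition supp_asg :: "nat \<Rightarrow> asg \<Rightarrow> edge set" where
  "supp_asg n w = {e. \<exists>m s. 1 \<le> m \<and> m \<le> n - 2 \<and> s \<in> {1,2,3} \<and> side_edge n m s = e
                        \<and> bweight (w m) s \<noteq> (0,0)}"

text \<open>Non-leaf vertex to which leaf l is attached.\<close>
definition att :: "nat \<Rightarrow> nat \<Rightarrow> nat" where
  "att n l = (if l \<le> 2 then 1 else if l \<ge> n - 1 then n - 2 else l - 1)"

definition span_edges :: "nat \<Rightarrow> nat \<Rightarrow> nat \<Rightarrow> nat \<Rightarrow> edge set" where
  "span_edges n i j k = {Leaf i, Leaf j, Leaf k} \<union> {Spine m | m. att n i \<le> m \<and> m < att n k}"

definition min_gens :: "asg set \<Rightarrow> asg set" where
  "min_gens S = {w \<in> S. w \<noteq> zero_asg \<and>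
      \<not> (\<exists>u \<in> S. \<exists>v \<in> S. u \<noteq> zero_asg \<and> v \<noteq> zero_asg \<and> w = add_asg u v)}"

inductive_set add_closure :: "asg set \<Rightarrow> asg set" for G where
  zero: "zero_asg \<in> add_closure G"
| add: "g \<in> G \<Longrightarrow> x \<in> add_closure G \<Longrightarrow> add_asg g x \<in> add_closure G"

definition minimal_generating_set :: "asg set \<Rightarrow> asg set \<Rightarrow> bool" where
  "minimal_generating_set G S \<longleftrightarrow> G \<subseteq> S \<and> add_closure G = S \<and>
      (\<forall>H. H \<subset> G \<longrightarrow> add_closure H \<noteq> S)"

definition triples :: "nat \<Rightarrow> (nat \<times> nat \<times> nat) set" where
  "triples n = {(i,j,k). 1 \<le> i \<and> i < j \<and> j < k \<and> k \<le> n}"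

definition wgen :: "nat \<Rightarrow> nat \<times> nat \<times> nat \<Rightarrow> asg" where
  "wgen n t = (case t of (i,j,k) \<Rightarrow>
      THE w. w \<in> min_gens (P_cat n) \<and> supp_asg n w = span_edges n i j k)"

text \<open>Polynomials in variables indexed by triples: monomials are multisets of triples.\<close>
type_synonym cpoly = "(nat \<times> nat \<times> nat) multiset \<Rightarrow>\<^sub>0 complex"

definition Var :: "nat \<times> nat \<times> nat \<Rightarrow> cpoly" where
  "Var t = Poly_Mapping.single {#t#} 1"

definition poly_ring :: "nat \<Rightarrow> cpoly set" where
  "poly_ring n = {p. \<forall>mo \<in> Poly_Mapping.keys p. set_mset mo \<subseteq> triples n}"

text \<open>Image of a monomial in P_T0 (the exponent of the corresponding element of C[P]).\<close>
definition mono_img :: "nat \<Rightarrow> (nat \<times> nat \<times> nat) multiset \<Rightarrow> asg" where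
  "mono_img n mo = (\<lambda>m p. sum_mset (image_mset (\<lambda>t. wgen n t m p) mo))"

text \<open>Kernel I_T0 of the C-algebra map C[w_ijk] \<rightarrow> C[P_T0], w_ijk \<mapsto> chi^{w_ijk}:
 the coefficient of chi^u in the image of p is the sum of the coefficients of p
 on monomials mapping to u.\<close>
definition I_cat :: "nat \<Rightarrow> cpoly set" where
  "I_cat n = {p \<in> poly_ring n. \<forall>u. (\<Sum>mo \<in> {mo \<in> Poly_Mapping.keys p. mono_img n mo = u}. Poly_Mapping.lookup p mo) = 0}"

inductive_set ideal_gen :: "cpoly set \<Rightarrow> cpoly set \<Rightarrow> cpoly set" for A S where
  zero: "0 \<in> ideal_gen A S"
| add: "r \<in> A \<Longrightarrow> g \<in> S \<Longrightarrow> x \<in> ideal_gen A S \<Longrightarrow> r * g + x \<in> ideal_gen A S"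

fun meet3 :: "nat \<times> nat \<times> nat \<Rightarrow> nat \<times> nat \<times> nat \<Rightarrow> nat \<times> nat \<times> nat" where
  "meet3 (i,j,k) (r,s,t) = (min i r, min j s, min k t)"
fun join3 :: "nat \<times> nat \<times> nat \<Rightarrow> nat \<times> nat \<times> nat \<Rightarrow> nat \<times> nat \<times> nat" where
  "join3 (i,j,k) (r,s,t) = (max i r, max j s, max k t)"

definition J_ideal :: "nat \<Rightarrow> cpoly set" where
  "J_ideal n = ideal_gen (poly_ring n)
     {Var a * Var b - Var (meet3 a b) * Var (join3 a b) | a b. a \<in> triples n \<and> b \<in> triples n}"

end

theory Submission
  imports Defs "HOL-Library.Product_Order"
begin

text \<open>
  A triangle of an element of P_T0 is determined by its entries a, b, c, d, f, and the gluing
  along the spine says that a + c and b + d at v_m reappear as a + b and d + f at v_(m+1).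
  Such a solution is a superposition of strands: a strand enters at leaf i (as c, or as a + b
  at v_1), runs along a-entries to the leaf j where it turns (b), then along d-entries to the
  leaf k where it ends (f, or b + d at v_(n-2)); a single strand is exactly w_ijk. Peeling off
  strands decomposes every element, and the sum of the b-entries, which is 1 for every w_ijk,
  shows that no w_ijk splits.

  The monomial map sends a multiset of triples to the sum of their strands. The binomials of
  J_3,n lie in its kernel because w_a + w_b = w_(a meet b) + w_(a join b). Conversely, replacing
  incomparable pairs by their meet and join rewrites every monomial modulo J_3,n into a chain,
  and a chain is recovered from its image, which records the multisets of first, second and
  third leaves of its strands.
\<close>

section \<open>Elements of P_T0 as solutions of a linear system\<close>

lemma P_cat_vanishes:
  assumes "w \<in> P_cat n" "m < 1 \<or> n - 2 < m \<or> 9 \<le> p"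
  shows "w m p = 0"
  using assms by (auto simp: P_cat_def Q_cat_def)

lemma P_cat_triangle:
  assumes w: "w \<in> P_cat n" and m: "1 \<le> m" "m \<le> n - 2"
  shows "w m 4 = w m 1 + w m 3" "w m 6 = w m 1 + w m 2" "w m 7 = 0" "w m 8 = 0"
proof -
  have "side_edge n m 2 = Leaf (m + 1)"
    by (simp add: side_edge_def)
  then have "snd (bweight (w m) 2) = 0"
    using w m by (auto simp: P_cat_def)
  moreover have "is_BZ (w m)"
    using w m by (simp add: P_cat_def Q_cat_def)
  ultimately show "w m 4 = w m 1 + w m 3" "w m 6 = w m 1 + w m 2" "w m 7 = 0" "w m 8 = 0"
    by (simp_all add: bweight_def is_BZ_def)
qed

lemma P_cat_ends:
  assumes w: "w \<in> P_cat n" and n: "n \<ge> 3"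
  shows "w 1 3 = 0" "w 1 5 = 0" "w (n - 2) 0 = 0" "w (n - 2) 2 = 0"
proof -
  have "side_edge n 1 1 = Leaf 1" "side_edge n (n - 2) 3 = Leaf n"
    by (simp_all add: side_edge_def)
  then have "snd (bweight (w 1) 1) = 0" "snd (bweight (w (n - 2)) 3) = 0"
    using w n by (auto simp: P_cat_def)
  then show "w 1 3 = 0" "w 1 5 = 0" "w (n - 2) 0 = 0" "w (n - 2) 2 = 0"
    by (simp_all add: bweight_def)
qed

lemma P_cat_spine:
  assumes w: "w \<in> P_cat n" and m: "1 \<le> m" "m \<le> n - 3"
  shows "w (m + 1) 0 + w (m + 1) 1 = w m 0 + w m 2"
    and "w (m + 1) 3 + w (m + 1) 5 = w m 1 + w m 3"
proof -
  have "bweight (w (m + 1)) 1 = swap (bweight (w m) 3)"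
    using w m by (simp add: P_cat_def Q_cat_def)
  moreover have "w m 4 = w m 1 + w m 3" "w m 8 = 0"
    using P_cat_triangle[OF w] m by auto
  ultimately show "w (m + 1) 0 + w (m + 1) 1 = w m 0 + w m 2"
    and "w (m + 1) 3 + w (m + 1) 5 = w m 1 + w m 3"
    by (simp_all add: bweight_def swap_def)
qed

lemma P_catI:
  assumes n: "n \<ge> 3"
    and vanishes: "\<And>m p. m < 1 \<or> n - 2 < m \<or> 9 \<le> p \<Longrightarrow> w m p = 0"
    and triangle: "\<And>m. 1 \<le> m \<Longrightarrow> m \<le> n - 2 \<Longrightarrow>
      w m 4 = w m 1 + w m 3 \<and> w m 6 = w m 1 + w m 2 \<and> w m 7 = 0 \<and> w m 8 = 0"
    and ends: "w 1 3 = 0" "w 1 5 = 0" "w (n - 2) 0 = 0" "w (n - 2) 2 = 0"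
    and spine: "\<And>m. 1 \<le> m \<Longrightarrow> m \<le> n - 3 \<Longrightarrow>
      w (m + 1) 0 + w (m + 1) 1 = w m 0 + w m 2 \<and> w (m + 1) 3 + w (m + 1) 5 = w m 1 + w m 3"
  shows "w \<in> P_cat n"
proof -
  have "w \<in> Q_cat n"
  proof -
    have "is_BZ (w m)" if "1 \<le> m" "m \<le> n - 2" for m
      using triangle[OF that] by (simp add: is_BZ_def)
    moreover have "bweight (w (m + 1)) 1 = swap (bweight (w m) 3)" if "1 \<le> m" "m \<le> n - 3" for m
      using triangle[of m] spine[OF that] that by (simp add: bweight_def swap_def)
    ultimately show ?thesis
      using vanishes by (simp add: Q_cat_def)
  qed
  moreover have "snd (bweight (w m) s) = 0"
    if "1 \<le> m" "m \<le> n - 2" "s \<in> {1, 2, 3}" "side_edge n m s = Leaf l" for m s l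
    using that triangle[OF that(1,2)] ends
    by (auto simp: side_edge_def bweight_def split: if_splits)
  ultimately show ?thesis
    by (auto simp: P_cat_def)
qed

lemma P_cat_leI:
  assumes u: "u \<in> P_cat n" and w: "w \<in> P_cat n"
    and le: "\<And>m p. 1 \<le> m \<Longrightarrow> m \<le> n - 2 \<Longrightarrow> p \<in> {0, 1, 2, 3, 5} \<Longrightarrow> u m p \<le> w m p"
  shows "u \<le> w"
proof (intro le_funI)
  fix m p
  show "u m p \<le> w m p"
  proof (cases "1 \<le> m \<and> m \<le> n - 2 \<and> p < 9")
    case True
    then have m: "1 \<le> m" "m \<le> n - 2"
      by auto
    note le_m = le[OF m]
    from True consider "p \<in> {0, 1, 2, 3, 5}" | "p = 4" | "p = 6" | "p = 7 \<or> p = 8"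
      by (fastforce simp: less_Suc_eq numeral_eq_Suc)
    then show ?thesis
    proof cases
      case 1
      then show ?thesis
        by (rule le_m)
    next
      case 2
      then show ?thesis
        using P_cat_triangle(1)[OF u m] P_cat_triangle(1)[OF w m] le_m[of 1] le_m[of 3] by simp
    next
      case 3
      then show ?thesis
        using P_cat_triangle(2)[OF u m] P_cat_triangle(2)[OF w m] le_m[of 1] le_m[of 2] by simp
    next
      case 4
      then show ?thesis
        using P_cat_triangle(3,4)[OF u m] by auto
    qed
  next
    case False
    then show ?thesis
      using P_cat_vanishes[OF u, of m p] by auto
  qed
qed

lemma add_asg_in_P_cat:
  assumes n: "n \<ge> 3" and u: "u \<in> P_cat n" and v: "v \<in> P_cat n"
  shows "add_asg u v \<in> P_cat n"
proof (rule P_catI[OF n])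
  show "add_asg u v m p = 0" if "m < 1 \<or> n - 2 < m \<or> 9 \<le> p" for m p
    using P_cat_vanishes[OF u that] P_cat_vanishes[OF v that] by (simp add: add_asg_def)
  show "add_asg u v m 4 = add_asg u v m 1 + add_asg u v m 3 \<and> add_asg u v m 6 = add_asg u v m 1 + add_asg u v m 2
      \<and> add_asg u v m 7 = 0 \<and> add_asg u v m 8 = 0" if "1 \<le> m" "m \<le> n - 2" for m
    using P_cat_triangle[OF u that] P_cat_triangle[OF v that] by (simp add: add_asg_def)
  show "add_asg u v 1 3 = 0" "add_asg u v 1 5 = 0" "add_asg u v (n - 2) 0 = 0" "add_asg u v (n - 2) 2 = 0"
    using P_cat_ends[OF u n] P_cat_ends[OF v n] by (simp_all add: add_asg_def)
  show "add_asg u v (m + 1) 0 + add_asg u v (m + 1) 1 = add_asg u v m 0 + add_asg u v m 2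
      \<and> add_asg u v (m + 1) 3 + add_asg u v (m + 1) 5 = add_asg u v m 1 + add_asg u v m 3"
    if "1 \<le> m" "m \<le> n - 3" for m
    using P_cat_spine[OF u that] P_cat_spine[OF v that] by (simp add: add_asg_def)
qed

lemma diff_in_P_cat:
  assumes n: "n \<ge> 3" and u: "u \<in> P_cat n" and w: "w \<in> P_cat n" and le: "u \<le> w"
  shows "w - u \<in> P_cat n"
proof (rule P_catI[OF n])
  note le' = le_funD[OF le_funD[OF le]]
  show "(w - u) m p = 0" if "m < 1 \<or> n - 2 < m \<or> 9 \<le> p" for m p
    using P_cat_vanishes[OF w that] by simp
  show "(w - u) m 4 = (w - u) m 1 + (w - u) m 3 \<and> (w - u) m 6 = (w - u) m 1 + (w - u) m 2
      \<and> (w - u) m 7 = 0 \<and> (w - u) m 8 = 0" if "1 \<le> m" "m \<le> n - 2" for m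
    using P_cat_triangle[OF u that] P_cat_triangle[OF w that] le'[of m] by simp
  show "(w - u) 1 3 = 0" "(w - u) 1 5 = 0" "(w - u) (n - 2) 0 = 0" "(w - u) (n - 2) 2 = 0"
    using P_cat_ends[OF w n] by simp_all
  show "(w - u) (m + 1) 0 + (w - u) (m + 1) 1 = (w - u) m 0 + (w - u) m 2
      \<and> (w - u) (m + 1) 3 + (w - u) (m + 1) 5 = (w - u) m 1 + (w - u) m 3"
    if "1 \<le> m" "m \<le> n - 3" for m
    using P_cat_spine[OF u that] P_cat_spine[OF w that] le'[of m] le'[of "m + 1"]
    by simp
qed

section \<open>Strands\<close>

text \<open>In P_T0 side 2 is always a leaf edge, so h = i = 0 and the BZ relations give e = b + d
  and g = b + c.\<close>

definition BZ_of :: "nat \<Rightarrow> nat \<Rightarrow> nat \<Rightarrow> nat \<Rightarrow> nat \<Rightarrow> nat \<Rightarrow> nat" where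
  "BZ_of a b c d f p = (if p < 9 then [a, b, c, d, b + d, f, b + c, 0, 0] ! p else 0)"

text \<open>At v_m the strand of (i, j, k) contributes a while it runs from leaf i towards j, b where it
  turns at leaf j = m + 1 and c where it enters at leaf i = m + 1; d and f play the roles of a and
  b on its way from j to k.\<close>

definition wijk :: "nat \<Rightarrow> nat \<times> nat \<times> nat \<Rightarrow> asg" where
  "wijk n t m = (case t of (i, j, k) \<Rightarrow>
     if 1 \<le> m \<and> m \<le> n - 2 then
       BZ_of (of_bool (i \<le> m \<and> m + 2 \<le> j)) (of_bool (i \<le> m \<and> j = m + 1)) (of_bool (i = m + 1))
             (of_bool (j \<le> m \<and> m + 2 \<le> k)) (of_bool (j \<le> m \<and> k = m + 1))
     else (\<lambda>p. 0))"

lemma wijk_inside: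
  "1 \<le> m \<Longrightarrow> m \<le> n - 2 \<Longrightarrow> wijk n (i, j, k) m =
     BZ_of (of_bool (i \<le> m \<and> m + 2 \<le> j)) (of_bool (i \<le> m \<and> j = m + 1)) (of_bool (i = m + 1))
           (of_bool (j \<le> m \<and> m + 2 \<le> k)) (of_bool (j \<le> m \<and> k = m + 1))"
  by (simp add: wijk_def)

lemma wijk_outside: "m < 1 \<or> n - 2 < m \<Longrightarrow> wijk n t m p = 0"
  by (cases t) (auto simp: wijk_def)

lemma BZ_of_simps [simp]:
  "BZ_of a b c d f 0 = a" "BZ_of a b c d f 1 = b" "BZ_of a b c d f (Suc 0) = b" "BZ_of a b c d f 2 = c" "BZ_of a b c d f 3 = d"
  "BZ_of a b c d f 4 = b + d" "BZ_of a b c d f 5 = f" "BZ_of a b c d f 6 = b + c"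
  "BZ_of a b c d f 7 = 0" "BZ_of a b c d f 8 = 0" "9 \<le> p \<Longrightarrow> BZ_of a b c d f p = 0"
  by (simp_all add: BZ_of_def)

lemma wijk_in_P_cat:
  assumes n: "n \<ge> 3" and t: "(i, j, k) \<in> triples n"
  shows "wijk n (i, j, k) \<in> P_cat n"
proof (rule P_catI[OF n])
  have ijk: "1 \<le> i" "i < j" "j < k" "k \<le> n"
    using t by (auto simp: triples_def)
  show "wijk n (i, j, k) m p = 0" if "m < 1 \<or> n - 2 < m \<or> 9 \<le> p" for m p
    using that by (cases "m < 1 \<or> n - 2 < m") (auto simp: wijk_inside wijk_outside)
  show "wijk n (i, j, k) m 4 = wijk n (i, j, k) m 1 + wijk n (i, j, k) m 3 \<and>
      wijk n (i, j, k) m 6 = wijk n (i, j, k) m 1 + wijk n (i, j, k) m 2 \<and>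
      wijk n (i, j, k) m 7 = 0 \<and> wijk n (i, j, k) m 8 = 0" if "1 \<le> m" "m \<le> n - 2" for m
    using that by (simp add: wijk_inside)
  show "wijk n (i, j, k) 1 3 = 0" "wijk n (i, j, k) 1 5 = 0"
    "wijk n (i, j, k) (n - 2) 0 = 0" "wijk n (i, j, k) (n - 2) 2 = 0"
    using n ijk by (auto simp: wijk_inside)
  show "wijk n (i, j, k) (m + 1) 0 + wijk n (i, j, k) (m + 1) 1 = wijk n (i, j, k) m 0 + wijk n (i, j, k) m 2 \<and>
      wijk n (i, j, k) (m + 1) 3 + wijk n (i, j, k) (m + 1) 5 = wijk n (i, j, k) m 1 + wijk n (i, j, k) m 3"
    if "1 \<le> m" "m \<le> n - 3" for m
    using that ijk by (simp add: wijk_inside) arith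
qed

lemma walk_exit:
  fixes x y :: "nat \<Rightarrow> nat"
  assumes "0 < x m0 + y m0" "m0 \<le> N" "x N = 0"
    and step: "\<And>m. m0 \<le> m \<Longrightarrow> m < N \<Longrightarrow> 0 < x m \<Longrightarrow> 0 < x (Suc m) + y (Suc m)"
  shows "\<exists>e. m0 \<le> e \<and> e \<le> N \<and> (\<forall>m. m0 \<le> m \<and> m < e \<longrightarrow> 0 < x m) \<and> 0 < y e"
  using assms
proof (induction "N - m0" arbitrary: m0)
  case 0
  then show ?case
    by (intro exI[of _ m0]) auto
next
  case (Suc d)
  show ?case
  proof (cases "0 < y m0")
    case True
    then show ?thesis
      using Suc.prems by (intro exI[of _ m0]) auto
  next
    case False
    then have "0 < x m0" "m0 < N"
      using Suc.prems Suc.hyps(2) by auto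
    have "\<exists>e. Suc m0 \<le> e \<and> e \<le> N \<and> (\<forall>m. Suc m0 \<le> m \<and> m < e \<longrightarrow> 0 < x m) \<and> 0 < y e"
    proof (rule Suc.hyps(1))
      show "0 < x (Suc m0) + y (Suc m0)"
        using Suc.prems(4)[of m0] \<open>0 < x m0\<close> \<open>m0 < N\<close> by simp
    qed (use Suc.hyps(2) Suc.prems \<open>m0 < N\<close> in auto)
    then obtain e where "Suc m0 \<le> e" "e \<le> N" "\<forall>m. Suc m0 \<le> m \<and> m < e \<longrightarrow> 0 < x m" "0 < y e"
      by blast
    with \<open>0 < x m0\<close> show ?thesis
      by (intro exI[of _ e]) (auto simp: le_Suc_eq Suc_le_eq dest: le_imp_less_or_eq)
  qed
qed

lemma P_cat_eq_zero:
  assumes n: "n \<ge> 3" and w: "w \<in> P_cat n"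
    and first: "w 1 0 + w 1 1 = 0" and no_start: "\<And>m. 1 \<le> m \<Longrightarrow> m \<le> n - 2 \<Longrightarrow> w m 2 = 0"
  shows "w = zero_asg"
proof -
  have ab: "w m 0 = 0 \<and> w m 1 = 0" if "1 \<le> m" "m \<le> n - 2" for m
    using that
  proof (induction m rule: nat_induct_at_least)
    case (Suc m)
    then show ?case
      using P_cat_spine(1)[OF w, of m] no_start[of m] by simp
  qed (use first in simp)
  have df: "w m 3 = 0 \<and> w m 5 = 0" if "1 \<le> m" "m \<le> n - 2" for m
    using that
  proof (induction m rule: nat_induct_at_least)
    case (Suc m)
    then show ?case
      using P_cat_spine(2)[OF w, of m] ab[of m] by simp
  qed (use P_cat_ends[OF w n] in simp)
  have "zero_asg \<in> P_cat n"
    by (rule P_catI[OF n]) (simp_all add: zero_asg_def)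
  then have "w \<le> zero_asg"
    using ab df no_start by (intro P_cat_leI[OF w]) auto
  then show ?thesis
    by (simp add: le_fun_def zero_asg_def fun_eq_iff)
qed

lemma P_cat_strand_start:
  assumes n: "n \<ge> 3" and w: "w \<in> P_cat n" and nz: "w \<noteq> zero_asg"
  obtains i where "1 \<le> i" "i \<le> n - 2" "0 < w i 0 + w i 1" "i = 1 \<or> 0 < w (i - 1) 2"
proof (cases "0 < w 1 0 + w 1 1")
  case True
  then show ?thesis
    using n by (intro that[of 1]) auto
next
  case False
  then obtain m where m: "1 \<le> m" "m \<le> n - 2" "0 < w m 2"
    using P_cat_eq_zero[OF n w] nz by fastforce
  moreover have "m \<noteq> n - 2"
    using m P_cat_ends(4)[OF w n] by auto
  ultimately show ?thesis
    using P_cat_spine(1)[OF w, of m] by (intro that[of "m + 1"]) auto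
qed

lemma P_cat_strand_i_to_j:
  assumes n: "n \<ge> 3" and w: "w \<in> P_cat n" and i: "1 \<le> i" "i \<le> n - 2" "0 < w i 0 + w i 1"
  obtains j where "i < j" "j \<le> n - 1" "\<forall>m. i \<le> m \<and> m + 1 < j \<longrightarrow> 0 < w m 0" "0 < w (j - 1) 1"
proof -
  have "\<exists>e. i \<le> e \<and> e \<le> n - 2 \<and> (\<forall>m. i \<le> m \<and> m < e \<longrightarrow> 0 < w m 0) \<and> 0 < w e 1"
  proof (rule walk_exit[where x = "\<lambda>m. w m 0"])
    show "0 < w (Suc m) 0 + w (Suc m) 1" if "i \<le> m" "m < n - 2" "0 < w m 0" for m
      using P_cat_spine(1)[OF w, of m] that i by simp
  qed (use i P_cat_ends(3)[OF w n] in auto)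
  then obtain e where "i \<le> e" "e \<le> n - 2" "\<forall>m. i \<le> m \<and> m < e \<longrightarrow> 0 < w m 0" "0 < w e 1"
    by blast
  then show ?thesis
    using n by (intro that[of "e + 1"]) auto
qed

lemma P_cat_strand_j_to_k:
  assumes n: "n \<ge> 3" and w: "w \<in> P_cat n" and j: "2 \<le> j" "j \<le> n - 1" "0 < w (j - 1) 1"
  obtains k where "j < k" "k \<le> n" "\<forall>m. j \<le> m \<and> m + 1 < k \<longrightarrow> 0 < w m 3" "k < n \<longrightarrow> 0 < w (k - 1) 5"
proof -
  \<comment> \<open>The strand may leave through leaf n, which is recorded by a virtual exit at vertex n - 1.\<close>
  define x where "x m = (if m \<le> n - 2 then w m 3 else 0)" for m
  define y where "y m = (if m \<le> n - 2 then w m 5 else 1)" for m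
  have "\<exists>e. j \<le> e \<and> e \<le> n - 1 \<and> (\<forall>m. j \<le> m \<and> m < e \<longrightarrow> 0 < x m) \<and> 0 < y e"
  proof (rule walk_exit)
    show "0 < x j + y j"
      using P_cat_spine(2)[OF w, of "j - 1"] j by (cases "j \<le> n - 2") (auto simp: x_def y_def)
    show "0 < x (Suc m) + y (Suc m)" if "j \<le> m" "m < n - 1" "0 < x m" for m
      using P_cat_spine(2)[OF w, of m] that j by (auto simp: x_def y_def)
  qed (use j in \<open>auto simp: x_def\<close>)
  then obtain e where "j \<le> e" "e \<le> n - 1" "\<forall>m. j \<le> m \<and> m < e \<longrightarrow> 0 < x m" "0 < y e"
    by blast
  then show ?thesis
    using n by (intro that[of "e + 1"]) (auto simp: x_def y_def split: if_splits)
qed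

lemma wijk_below:
  assumes n: "n \<ge> 3" and w: "w \<in> P_cat n" and nz: "w \<noteq> zero_asg"
  obtains t where "t \<in> triples n" "wijk n t \<le> w"
proof -
  obtain i where i: "1 \<le> i" "i \<le> n - 2" "0 < w i 0 + w i 1" "i = 1 \<or> 0 < w (i - 1) 2"
    using P_cat_strand_start[OF n w nz] by blast
  obtain j where j: "i < j" "j \<le> n - 1" "\<forall>m. i \<le> m \<and> m + 1 < j \<longrightarrow> 0 < w m 0" "0 < w (j - 1) 1"
    using P_cat_strand_i_to_j[OF n w i(1-3)] by blast
  obtain k where k: "j < k" "k \<le> n" "\<forall>m. j \<le> m \<and> m + 1 < k \<longrightarrow> 0 < w m 3" "k < n \<longrightarrow> 0 < w (k - 1) 5"
    using P_cat_strand_j_to_k[OF n w _ j(2,4)] i(1) j(1) by auto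
  have t: "(i, j, k) \<in> triples n"
    using i j k by (simp add: triples_def)
  have "wijk n (i, j, k) \<le> w"
  proof (rule P_cat_leI[OF wijk_in_P_cat[OF n t] w])
    fix m p :: nat
    assume m: "1 \<le> m" "m \<le> n - 2" and "p \<in> {0, 1, 2, 3, 5}"
    have ind: "of_bool P \<le> x" if "P \<Longrightarrow> 0 < x" for P and x :: nat
      using that by (cases P) auto
    have "i \<le> m \<and> m + 2 \<le> j \<Longrightarrow> 0 < w m 0" "i \<le> m \<and> j = m + 1 \<Longrightarrow> 0 < w m 1"
      "i = m + 1 \<Longrightarrow> 0 < w m 2" "j \<le> m \<and> m + 2 \<le> k \<Longrightarrow> 0 < w m 3"
      "j \<le> m \<and> k = m + 1 \<Longrightarrow> 0 < w m 5"
      using i(4) j(3,4) k(3,4) m by auto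
    with \<open>p \<in> {0, 1, 2, 3, 5}\<close> show "wijk n (i, j, k) m p \<le> w m p"
      unfolding wijk_inside[OF m] by (auto intro!: ind)
  qed
  with t show ?thesis
    by (rule that)
qed

definition asg_degree :: "nat \<Rightarrow> asg \<Rightarrow> nat" where
  "asg_degree n w = (\<Sum>m<n. w m 1)"

lemma asg_degree_add: "asg_degree n (add_asg u v) = asg_degree n u + asg_degree n v"
  by (simp add: asg_degree_def add_asg_def sum.distrib)

lemma asg_degree_mono: "u \<le> w \<Longrightarrow> asg_degree n u \<le> asg_degree n w"
  unfolding asg_degree_def by (intro sum_mono) (simp add: le_fun_def)

lemma asg_degree_wijk:
  assumes t: "(i, j, k) \<in> triples n"
  shows "asg_degree n (wijk n (i, j, k)) = 1"
proof -
  have "wijk n (i, j, k) m 1 = (if m = j - 1 then 1 else 0)" if "m < n" for m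
    using t that by (cases "m < 1 \<or> n - 2 < m") (auto simp: wijk_inside wijk_outside triples_def)
  then have "asg_degree n (wijk n (i, j, k)) = (\<Sum>m<n. if m = j - 1 then 1 else 0)"
    unfolding asg_degree_def by (intro sum.cong) auto
  also have "\<dots> = 1"
    using t by (auto simp: triples_def)
  finally show ?thesis .
qed

lemma P_cat_subset_closure:
  assumes n: "n \<ge> 3"
  shows "w \<in> P_cat n \<Longrightarrow> w \<in> add_closure (wijk n ` triples n)"
proof (induction "asg_degree n w" arbitrary: w rule: less_induct)
  case less
  show ?case
  proof (cases "w = zero_asg")
    case True
    then show ?thesis
      by (simp add: add_closure.zero)
  next
    case False
    then obtain t where t: "t \<in> triples n" "wijk n t \<le> w"
      using wijk_below[OF n less.prems] by blast
    then have t_P: "wijk n t \<in> P_cat n"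
      using wijk_in_P_cat[OF n] by (cases t) auto
    have w_eq: "w = add_asg (wijk n t) (w - wijk n t)"
      using t(2) by (simp add: add_asg_def le_fun_def fun_eq_iff)
    have "asg_degree n (wijk n t) = 1"
      using asg_degree_wijk t(1) by (cases t) auto
    then have "asg_degree n (w - wijk n t) < asg_degree n w"
      using asg_degree_add[of n "wijk n t" "w - wijk n t"] w_eq by simp
    then have "w - wijk n t \<in> add_closure (wijk n ` triples n)"
      using less.hyps diff_in_P_cat[OF n t_P less.prems t(2)] by blast
    then show ?thesis
      using w_eq t(1) add_closure.add by (metis imageI)
  qed
qed

lemma P_cat_eq_closure:
  assumes n: "n \<ge> 3"
  shows "P_cat n = add_closure (wijk n ` triples n)"
proof
  show "add_closure (wijk n ` triples n) \<subseteq> P_cat n"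
  proof
    fix w
    assume "w \<in> add_closure (wijk n ` triples n)"
    then show "w \<in> P_cat n"
    proof induction
      case zero
      show ?case
        by (rule P_catI[OF n]) (simp_all add: zero_asg_def)
    next
      case (add g x)
      then show ?case
        using wijk_in_P_cat[OF n] add_asg_in_P_cat[OF n] by fastforce
    qed
  qed
qed (use P_cat_subset_closure[OF n] in blast)

lemma asg_degree_pos:
  assumes n: "n \<ge> 3" and w: "w \<in> P_cat n" "w \<noteq> zero_asg"
  shows "asg_degree n w \<ge> 1"
proof -
  obtain i j k where "(i, j, k) \<in> triples n" "wijk n (i, j, k) \<le> w"
    using wijk_below[OF n w] by (metis prod_cases3)
  then show ?thesis
    using asg_degree_mono[of "wijk n (i, j, k)" w n] asg_degree_wijk by fastforce
qed

lemma wijk_min_gen: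
  assumes n: "n \<ge> 3" and t: "(i, j, k) \<in> triples n"
  shows "wijk n (i, j, k) \<in> min_gens (P_cat n)"
proof -
  have "wijk n (i, j, k) \<noteq> add_asg u v"
    if "u \<in> P_cat n" "v \<in> P_cat n" "u \<noteq> zero_asg" "v \<noteq> zero_asg" for u v
  proof
    assume "wijk n (i, j, k) = add_asg u v"
    then have "asg_degree n u + asg_degree n v = 1"
      using asg_degree_add[of n u v] asg_degree_wijk[OF t] by simp
    then show False
      using asg_degree_pos[OF n that(1,3)] asg_degree_pos[OF n that(2,4)] by linarith
  qed
  moreover have "wijk n (i, j, k) \<noteq> zero_asg"
    using asg_degree_wijk[OF t] by (auto simp: asg_degree_def zero_asg_def)
  ultimately show ?thesis
    using wijk_in_P_cat[OF n t] by (auto simp: min_gens_def)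
qed

lemma min_gen_mem_generators:
  assumes "add_closure H \<subseteq> S" "zero_asg \<notin> H" "w \<in> min_gens S" "w \<in> add_closure H"
  shows "w \<in> H"
  using assms(4)
proof cases
  case zero
  then show ?thesis
    using assms(3) by (simp add: min_gens_def)
next
  case (add h x)
  have "add_asg h zero_asg = h"
    by (simp add: add_asg_def zero_asg_def)
  then have "h \<in> S"
    using add_closure.add[OF add(2) add_closure.zero] assms(1) by auto
  moreover have "x \<in> S"
    using add(3) assms(1) by blast
  ultimately have "x = zero_asg"
    using assms(2,3) add by (auto simp: min_gens_def)
  then show ?thesis
    using add \<open>add_asg h zero_asg = h\<close> by simp
qed

lemma min_gens_eq_generators:
  assumes "add_closure G = S" "G \<subseteq> min_gens S"
  shows "min_gens S = G"
proof
  have "zero_asg \<notin> G"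
    using assms(2) by (auto simp: min_gens_def)
  then show "min_gens S \<subseteq> G"
    using min_gen_mem_generators[of G S] assms(1) by (auto simp: min_gens_def)
qed (fact assms(2))

lemma minimal_generating_setI:
  assumes "add_closure G = S" "G \<subseteq> min_gens S"
  shows "minimal_generating_set G S"
  unfolding minimal_generating_set_def
proof (intro conjI allI impI)
  show "G \<subseteq> S"
    using assms(2) by (auto simp: min_gens_def)
  fix H
  assume "H \<subset> G"
  then obtain g where g: "g \<in> G" "g \<notin> H"
    by blast
  show "add_closure H \<noteq> S"
  proof
    assume H: "add_closure H = S"
    have "zero_asg \<notin> H"
      using \<open>H \<subset> G\<close> assms(2) by (auto simp: min_gens_def)
    moreover have "g \<in> min_gens S" "g \<in> add_closure H"
      using g(1) assms H by (auto simp: min_gens_def)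
    ultimately show False
      using min_gen_mem_generators[of H S g] H g(2) by blast
  qed
qed (fact assms(1))

lemma supp_asg_eqI:
  assumes nonzero_iff: "\<And>m s. 1 \<le> m \<Longrightarrow> m \<le> n - 2 \<Longrightarrow> s \<in> {1, 2, 3} \<Longrightarrow>
      bweight (w m) s \<noteq> (0, 0) \<longleftrightarrow> side_edge n m s \<in> E"
    and covered: "\<And>e. e \<in> E \<Longrightarrow> \<exists>m s. 1 \<le> m \<and> m \<le> n - 2 \<and> s \<in> {1, 2, 3} \<and> side_edge n m s = e"
  shows "supp_asg n w = E"
  unfolding supp_asg_def using nonzero_iff covered by blast

lemma bweight_wijk_nonzero:
  assumes m: "1 \<le> m" "m \<le> n - 2" and ijk: "i < j" "j < k"
  shows "bweight (wijk n (i, j, k) m) 1 \<noteq> (0, 0) \<longleftrightarrow> i \<le> m \<and> m < k"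
    and "bweight (wijk n (i, j, k) m) 2 \<noteq> (0, 0) \<longleftrightarrow> i = m + 1 \<or> j = m + 1 \<or> k = m + 1"
    and "bweight (wijk n (i, j, k) m) 3 \<noteq> (0, 0) \<longleftrightarrow> i \<le> m + 1 \<and> m + 2 \<le> k"
  using ijk by (auto simp: wijk_inside[OF m] bweight_def)

lemma side_edge_in_span_edges:
  assumes n: "n \<ge> 3" and m: "1 \<le> m" "m \<le> n - 2" and ijk: "1 \<le> i" "i < j" "j < k" "k \<le> n"
  shows "side_edge n m 1 \<in> span_edges n i j k \<longleftrightarrow> i \<le> m \<and> m < k"
    and "side_edge n m 2 \<in> span_edges n i j k \<longleftrightarrow> i = m + 1 \<or> j = m + 1 \<or> k = m + 1"
    and "side_edge n m 3 \<in> span_edges n i j k \<longleftrightarrow> i \<le> m + 1 \<and> m + 2 \<le> k"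
  using assms by (auto simp: side_edge_def span_edges_def att_def)

lemma Leaf_is_side_edge:
  assumes n: "n \<ge> 3" and l: "1 \<le> l" "l \<le> n"
  shows "\<exists>m s. 1 \<le> m \<and> m \<le> n - 2 \<and> s \<in> {1, 2, 3} \<and> side_edge n m s = Leaf l"
proof -
  consider "l = 1" | "l = n" | "2 \<le> l" "l \<le> n - 1"
    using l by linarith
  then show ?thesis
  proof cases
    case 1
    then have "side_edge n 1 1 = Leaf l" "1 \<le> n - 2"
      using n by (simp_all add: side_edge_def)
    then show ?thesis
      by blast
  next
    case 2
    then have "side_edge n (n - 2) 3 = Leaf l" "1 \<le> n - 2"
      using n by (simp_all add: side_edge_def)
    then show ?thesis
      by blast
  next
    case 3
    then have "side_edge n (l - 1) 2 = Leaf l" "1 \<le> l - 1" "l - 1 \<le> n - 2"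
      by (simp_all add: side_edge_def)
    then show ?thesis
      by blast
  qed
qed

lemma Spine_is_side_edge:
  assumes "1 \<le> m" "m < n - 2"
  shows "\<exists>m' s. 1 \<le> m' \<and> m' \<le> n - 2 \<and> s \<in> {1, 2, 3} \<and> side_edge n m' s = Spine m"
proof -
  have "side_edge n m 3 = Spine m" "m \<le> n - 2"
    using assms by (simp_all add: side_edge_def)
  then show ?thesis
    using assms(1) by blast
qed

lemma supp_wijk:
  assumes n: "n \<ge> 3" and t: "(i, j, k) \<in> triples n"
  shows "supp_asg n (wijk n (i, j, k)) = span_edges n i j k"
proof (rule supp_asg_eqI)
  have ijk: "1 \<le> i" "i < j" "j < k" "k \<le> n"
    using t by (auto simp: triples_def)
  fix m s :: nat
  assume m: "1 \<le> m" "m \<le> n - 2" and "s \<in> {1, 2, 3}"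
  then show "bweight (wijk n (i, j, k) m) s \<noteq> (0, 0) \<longleftrightarrow> side_edge n m s \<in> span_edges n i j k"
    using bweight_wijk_nonzero[OF m ijk(2,3)] side_edge_in_span_edges[OF n m ijk] by auto
next
  fix e
  assume "e \<in> span_edges n i j k"
  moreover have "1 \<le> m \<and> m < n - 2" if "att n i \<le> m" "m < att n k" for m
    using that n by (auto simp: att_def split: if_splits)
  ultimately show "\<exists>m s. 1 \<le> m \<and> m \<le> n - 2 \<and> s \<in> {1, 2, 3} \<and> side_edge n m s = e"
    using t Leaf_is_side_edge[OF n] Spine_is_side_edge by (auto simp: span_edges_def triples_def)
qed

lemma span_edges_inj:
  assumes "(i, j, k) \<in> triples n" "(i', j', k') \<in> triples n" "span_edges n i j k = span_edges n i' j' k'"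
  shows "(i, j, k) = (i', j', k')"
proof -
  have "{l. Leaf l \<in> span_edges n i j k} = {i, j, k}" "{l. Leaf l \<in> span_edges n i' j' k'} = {i', j', k'}"
    by (auto simp: span_edges_def)
  then have "l \<in> {i, j, k} \<longleftrightarrow> l \<in> {i', j', k'}" for l
    using assms(3) by simp
  from this[of i] this[of j] this[of k] this[of i'] this[of j'] this[of k'] show ?thesis
    using assms(1,2) by (auto simp: triples_def)
qed

lemma min_gens_P_cat:
  assumes n: "n \<ge> 3"
  shows "min_gens (P_cat n) = wijk n ` triples n"
  using P_cat_eq_closure[OF n] wijk_min_gen[OF n]
  by (intro min_gens_eq_generators) auto

lemma min_gen_with_span_edges:
  assumes n: "n \<ge> 3" and t: "(i, j, k) \<in> triples n"
  shows "w \<in> min_gens (P_cat n) \<and> supp_asg n w = span_edges n i j k \<longleftrightarrow> w = wijk n (i, j, k)"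
proof
  assume w: "w \<in> min_gens (P_cat n) \<and> supp_asg n w = span_edges n i j k"
  then obtain i' j' k' where t': "(i', j', k') \<in> triples n" "w = wijk n (i', j', k')"
    using min_gens_P_cat[OF n] by auto
  then have "span_edges n i' j' k' = span_edges n i j k"
    using w supp_wijk[OF n] by auto
  then show "w = wijk n (i, j, k)"
    using span_edges_inj[OF t'(1) t] t'(2) by simp
qed (use min_gens_P_cat[OF n] supp_wijk[OF n t] t in auto)

lemma wgen_eq_wijk:
  assumes n: "n \<ge> 3" and t: "t \<in> triples n"
  shows "wgen n t = wijk n t"
  using t min_gen_with_span_edges[OF n] by (cases t) (simp add: wgen_def)

section \<open>The toric ideal\<close>

lemma ideal_gen_add: "x \<in> ideal_gen A S \<Longrightarrow> y \<in> ideal_gen A S \<Longrightarrow> x + y \<in> ideal_gen A S"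
proof (induction x rule: ideal_gen.induct)
  case (add r g x)
  then have "r * g + (x + y) \<in> ideal_gen A S"
    by (intro ideal_gen.add)
  then show ?case
    by (simp add: add.assoc)
qed simp

lemma generator_in_ideal_gen: "r \<in> A \<Longrightarrow> g \<in> S \<Longrightarrow> r * g \<in> ideal_gen A S"
  using ideal_gen.add[OF _ _ ideal_gen.zero] by fastforce

lemma poly_ring_mult: "p \<in> poly_ring n \<Longrightarrow> q \<in> poly_ring n \<Longrightarrow> p * q \<in> poly_ring n"
  unfolding poly_ring_def using keys_mult[of p q] by fastforce

lemma poly_ring_add: "p \<in> poly_ring n \<Longrightarrow> q \<in> poly_ring n \<Longrightarrow> p + q \<in> poly_ring n"
  unfolding poly_ring_def using keys_add[of p q] by blast

lemma poly_ring_diff: "p \<in> poly_ring n \<Longrightarrow> q \<in> poly_ring n \<Longrightarrow> p - q \<in> poly_ring n"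
  unfolding poly_ring_def using keys_diff[of p q] by blast

lemma single_in_poly_ring: "set_mset mo \<subseteq> triples n \<Longrightarrow> Poly_Mapping.single mo c \<in> poly_ring n"
  by (simp add: poly_ring_def)

lemma meet3_join3_in_triples:
  assumes "a \<in> triples n" "b \<in> triples n"
  shows "meet3 a b \<in> triples n" "join3 a b \<in> triples n"
  using assms by (cases a; cases b; auto simp: triples_def)+

lemma J_ideal_subset_poly_ring: "J_ideal n \<subseteq> poly_ring n"
proof
  fix x
  assume "x \<in> J_ideal n"
  then show "x \<in> poly_ring n"
    unfolding J_ideal_def
  proof (induction x rule: ideal_gen.induct)
    case zero
    then show ?case
      by (simp add: poly_ring_def)
  next
    case (add r g x)
    then obtain a b where g: "g = Var a * Var b - Var (meet3 a b) * Var (join3 a b)"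
      and ab: "a \<in> triples n" "b \<in> triples n"
      by blast
    have "g \<in> poly_ring n"
      unfolding g Var_def using ab meet3_join3_in_triples[OF ab]
      by (intro poly_ring_diff poly_ring_mult single_in_poly_ring) auto
    with add show ?case
      by (intro poly_ring_add poly_ring_mult)
  qed
qed

definition fiber_sum :: "('m \<Rightarrow> 'u) \<Rightarrow> 'u \<Rightarrow> ('m \<Rightarrow>\<^sub>0 'a::comm_monoid_add) \<Rightarrow> 'a" where
  "fiber_sum f u p = (\<Sum>mo \<in> {mo \<in> Poly_Mapping.keys p. f mo = u}. Poly_Mapping.lookup p mo)"

lemma I_cat_eq: "I_cat n = {p \<in> poly_ring n. \<forall>u. fiber_sum (mono_img n) u p = 0}"
  by (simp add: I_cat_def fiber_sum_def)

lemma fiber_sum_eq_sum: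
  assumes "finite M" "Poly_Mapping.keys p \<subseteq> M"
  shows "fiber_sum f u p = (\<Sum>mo\<in>M. if f mo = u then Poly_Mapping.lookup p mo else 0)"
proof -
  have "fiber_sum f u p = (\<Sum>mo\<in>Poly_Mapping.keys p. if f mo = u then Poly_Mapping.lookup p mo else 0)"
    unfolding fiber_sum_def by (rule sum.inter_filter) simp
  also have "\<dots> = (\<Sum>mo\<in>M. if f mo = u then Poly_Mapping.lookup p mo else 0)"
    using assms by (intro sum.mono_neutral_left) (auto simp: in_keys_iff)
  finally show ?thesis .
qed

lemma fiber_sum_add: "fiber_sum f u (p + q) = fiber_sum f u p + fiber_sum f u q"
proof -
  let ?M = "Poly_Mapping.keys p \<union> Poly_Mapping.keys q"
  have "fiber_sum f u (p + q) = (\<Sum>mo\<in>?M. if f mo = u then Poly_Mapping.lookup (p + q) mo else 0)"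
    using keys_add[of p q] by (intro fiber_sum_eq_sum) auto
  also have "\<dots> = (\<Sum>mo\<in>?M. (if f mo = u then Poly_Mapping.lookup p mo else 0)
      + (if f mo = u then Poly_Mapping.lookup q mo else 0))"
    by (intro sum.cong) (auto simp: lookup_add)
  also have "\<dots> = fiber_sum f u p + fiber_sum f u q"
    by (simp add: fiber_sum_eq_sum[of ?M] sum.distrib)
  finally show ?thesis .
qed

lemma fiber_sum_diff:
  fixes p q :: "'m \<Rightarrow>\<^sub>0 'a::ab_group_add"
  shows "fiber_sum f u (p - q) = fiber_sum f u p - fiber_sum f u q"
proof -
  let ?M = "Poly_Mapping.keys p \<union> Poly_Mapping.keys q"
  have "fiber_sum f u (p - q) = (\<Sum>mo\<in>?M. if f mo = u then Poly_Mapping.lookup (p - q) mo else 0)"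
    using keys_diff[of p q] by (intro fiber_sum_eq_sum) auto
  also have "\<dots> = (\<Sum>mo\<in>?M. (if f mo = u then Poly_Mapping.lookup p mo else 0)
      - (if f mo = u then Poly_Mapping.lookup q mo else 0))"
    by (intro sum.cong) (auto simp: lookup_minus)
  also have "\<dots> = fiber_sum f u p - fiber_sum f u q"
    by (simp add: fiber_sum_eq_sum[of ?M] sum_subtractf)
  finally show ?thesis .
qed

lemma fiber_sum_zero [simp]: "fiber_sum f u 0 = 0"
  by (simp add: fiber_sum_def)

lemma fiber_sum_sum: "fiber_sum f u (sum g I) = (\<Sum>i\<in>I. fiber_sum f u (g i))"
  by (induction I rule: infinite_finite_induct) (simp_all add: fiber_sum_add)

lemma fiber_sum_single: "fiber_sum f u (Poly_Mapping.single mo c) = (if f mo = u then c else 0)"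
  by (subst fiber_sum_eq_sum[of "{mo}"]) auto

lemma sum_single_lookup: "(\<Sum>mo\<in>Poly_Mapping.keys p. Poly_Mapping.single mo (Poly_Mapping.lookup p mo)) = p"
  by (rule poly_mapping_eqI)
    (simp add: lookup_sum lookup_single when_def in_keys_iff sum.If_cases[where P = "(=) _"])

lemma fiber_sum_mult_binomial:
  fixes r :: "'m::comm_monoid_add \<Rightarrow>\<^sub>0 'a::comm_ring_1"
  assumes cong: "\<And>C. f (C + A) = f (C + B)"
  shows "fiber_sum f u (r * (Poly_Mapping.single A 1 - Poly_Mapping.single B 1)) = 0"
proof -
  have "r * (Poly_Mapping.single A 1 - Poly_Mapping.single B 1)
      = (\<Sum>mo\<in>Poly_Mapping.keys r. Poly_Mapping.single mo (Poly_Mapping.lookup r mo))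
        * (Poly_Mapping.single A 1 - Poly_Mapping.single B 1)"
    by (simp add: sum_single_lookup)
  also have "\<dots> = (\<Sum>mo\<in>Poly_Mapping.keys r. Poly_Mapping.single (mo + A) (Poly_Mapping.lookup r mo)
      - Poly_Mapping.single (mo + B) (Poly_Mapping.lookup r mo))"
    by (simp add: sum_distrib_right right_diff_distrib mult_single sum_subtractf)
  finally show ?thesis
    by (simp add: fiber_sum_sum fiber_sum_diff fiber_sum_single cong)
qed

lemma sum_single_rep_eq_0:
  fixes p :: "'m \<Rightarrow>\<^sub>0 'a::comm_monoid_add"
  assumes rep_iff: "\<And>mo mo'. mo \<in> Poly_Mapping.keys p \<Longrightarrow> mo' \<in> Poly_Mapping.keys p \<Longrightarrow>
      rep mo = rep mo' \<longleftrightarrow> f mo = f mo'"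
    and fibers: "\<And>u. fiber_sum f u p = 0"
  shows "(\<Sum>mo\<in>Poly_Mapping.keys p. Poly_Mapping.single (rep mo) (Poly_Mapping.lookup p mo)) = 0"
    (is "?q = 0")
proof (rule poly_mapping_eqI)
  let ?K = "Poly_Mapping.keys p"
  fix x
  have "Poly_Mapping.lookup ?q x = (\<Sum>mo\<in>?K. if rep mo = x then Poly_Mapping.lookup p mo else 0)"
    by (simp add: lookup_sum lookup_single when_def)
  then have lookup_q: "Poly_Mapping.lookup ?q x = (\<Sum>mo \<in> {mo \<in> ?K. rep mo = x}. Poly_Mapping.lookup p mo)"
    by (simp add: sum.inter_filter)
  show "Poly_Mapping.lookup ?q x = Poly_Mapping.lookup 0 x"
  proof (cases "\<exists>mo\<in>?K. rep mo = x")
    case True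
    then obtain mo0 where "mo0 \<in> ?K" "rep mo0 = x"
      by blast
    then have "{mo \<in> ?K. rep mo = x} = {mo \<in> ?K. f mo = f mo0}"
      using rep_iff[of _ mo0] by auto
    then show ?thesis
      using fibers[of "f mo0"] by (simp add: lookup_q fiber_sum_def)
  next
    case False
    then have empty: "{mo \<in> ?K. rep mo = x} = {}"
      by blast
    show ?thesis
      by (simp only: lookup_q empty sum.empty lookup_zero)
  qed
qed

text \<open>Replacing every monomial by its representative changes p only modulo S, and the result
  has the fiber sums of p as coefficients.\<close>

lemma fibers_vanish_imp_in:
  fixes p :: "'m \<Rightarrow>\<^sub>0 'a::ab_group_add"
  assumes zero: "0 \<in> S" and add: "\<And>x y. x \<in> S \<Longrightarrow> y \<in> S \<Longrightarrow> x + y \<in> S"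
    and move: "\<And>mo. mo \<in> Poly_Mapping.keys p \<Longrightarrow>
      Poly_Mapping.single mo (Poly_Mapping.lookup p mo) - Poly_Mapping.single (rep mo) (Poly_Mapping.lookup p mo) \<in> S"
    and rep_iff: "\<And>mo mo'. mo \<in> Poly_Mapping.keys p \<Longrightarrow> mo' \<in> Poly_Mapping.keys p \<Longrightarrow>
      rep mo = rep mo' \<longleftrightarrow> f mo = f mo'"
    and fibers: "\<And>u. fiber_sum f u p = 0"
  shows "p \<in> S"
proof -
  let ?K = "Poly_Mapping.keys p"
  have sum_in: "sum g I \<in> S" if "\<And>i. i \<in> I \<Longrightarrow> g i \<in> S" for g I
    using that by (induction I rule: infinite_finite_induct) (auto intro: zero add)
  have "p = p - (\<Sum>mo\<in>?K. Poly_Mapping.single (rep mo) (Poly_Mapping.lookup p mo))"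
    using sum_single_rep_eq_0[OF rep_iff fibers] by simp
  also have "\<dots> = (\<Sum>mo\<in>?K. Poly_Mapping.single mo (Poly_Mapping.lookup p mo)
      - Poly_Mapping.single (rep mo) (Poly_Mapping.lookup p mo))"
    by (simp add: sum_subtractf sum_single_lookup)
  also have "\<dots> \<in> S"
    by (rule sum_in) (rule move)
  finally show ?thesis .
qed

lemma mono_img_add: "mono_img n (A + B) = add_asg (mono_img n A) (mono_img n B)"
  by (simp add: mono_img_def add_asg_def)

lemma of_bool_min_max_add:
  fixes i j i' j' m :: nat
  assumes "i < j" "i' < j'"
  shows "of_bool (i \<le> m \<and> m + 2 \<le> j) + of_bool (i' \<le> m \<and> m + 2 \<le> j')
      = (of_bool (min i i' \<le> m \<and> m + 2 \<le> min j j') + of_bool (max i i' \<le> m \<and> m + 2 \<le> max j j') :: nat)"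
    and "of_bool (i \<le> m \<and> j = m + 1) + of_bool (i' \<le> m \<and> j' = m + 1)
      = (of_bool (min i i' \<le> m \<and> min j j' = m + 1) + of_bool (max i i' \<le> m \<and> max j j' = m + 1) :: nat)"
    and "of_bool (i = m + 1) + of_bool (i' = m + 1)
      = (of_bool (min i i' = m + 1) + of_bool (max i i' = m + 1) :: nat)"
  using assms unfolding of_bool_def min_def max_def by auto

lemma BZ_of_add:
  "BZ_of a b c d f p + BZ_of a' b' c' d' f' p = BZ_of (a + a') (b + b') (c + c') (d + d') (f + f') p"
  by (simp add: BZ_of_def nth_Cons')

lemma wijk_meet3_join3:
  assumes a: "a \<in> triples n" and b: "b \<in> triples n"
  shows "add_asg (wijk n a) (wijk n b) = add_asg (wijk n (meet3 a b)) (wijk n (join3 a b))"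
proof (intro ext)
  fix m p
  obtain i j k i' j' k' where ab: "a = (i, j, k)" "b = (i', j', k')"
    by (cases a; cases b)
  have ord: "i < j" "j < k" "i' < j'" "j' < k'"
    using a b ab by (auto simp: triples_def)
  show "add_asg (wijk n a) (wijk n b) m p = add_asg (wijk n (meet3 a b)) (wijk n (join3 a b)) m p"
  proof (cases "m < 1 \<or> n - 2 < m")
    case False
    then have m: "1 \<le> m" "m \<le> n - 2"
      by auto
    show ?thesis
      unfolding add_asg_def ab meet3.simps join3.simps wijk_inside[OF m] BZ_of_add
      by (simp only: of_bool_min_max_add[OF ord(1,3)] of_bool_min_max_add[OF ord(2,4)])
  qed (simp add: add_asg_def wijk_outside)
qed

lemma mono_img_meet3_join3:
  assumes n: "n \<ge> 3" and a: "a \<in> triples n" and b: "b \<in> triples n"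
  shows "mono_img n (C + {#a, b#}) = mono_img n (C + {#meet3 a b, join3 a b#})"
proof -
  have pair: "mono_img n {#a, b#} = mono_img n {#meet3 a b, join3 a b#}"
    using wijk_meet3_join3[OF a b] meet3_join3_in_triples[OF a b] a b
    by (simp add: mono_img_def add_asg_def wgen_eq_wijk[OF n] fun_eq_iff)
  show ?thesis
    unfolding mono_img_add pair ..
qed

lemma J_ideal_subset_I_cat:
  assumes n: "n \<ge> 3"
  shows "J_ideal n \<subseteq> I_cat n"
proof
  fix x
  assume x: "x \<in> J_ideal n"
  have "fiber_sum (mono_img n) u x = 0" for u
    using x unfolding J_ideal_def
  proof (induction x rule: ideal_gen.induct)
    case (add r g x)
    then obtain a b where "g = Var a * Var b - Var (meet3 a b) * Var (join3 a b)"
      and ab: "a \<in> triples n" "b \<in> triples n"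
      by blast
    then have "g = Poly_Mapping.single {#a, b#} 1 - Poly_Mapping.single {#meet3 a b, join3 a b#} 1"
      by (simp add: Var_def mult_single add_mset_commute)
    then have "fiber_sum (mono_img n) u (r * g) = 0"
      using mono_img_meet3_join3[OF n ab] by (simp add: fiber_sum_mult_binomial)
    then show ?case
      using add.IH by (simp add: fiber_sum_add)
  qed simp
  then show "x \<in> I_cat n"
    using x J_ideal_subset_poly_ring by (auto simp: I_cat_eq)
qed

section \<open>Sorting monomials by meets and joins\<close>

definition chain_mset :: "(nat \<times> nat \<times> nat) multiset \<Rightarrow> bool" where
  "chain_mset M \<longleftrightarrow> (\<forall>a\<in>#M. \<forall>b\<in>#M. a \<le> b \<or> b \<le> a)"

definition meet_join_step :: "(nat \<times> nat \<times> nat) multiset \<Rightarrow> (nat \<times> nat \<times> nat) multiset \<Rightarrow> bool" where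
  "meet_join_step M M' \<longleftrightarrow> (\<exists>a b R. M = R + {#a, b#} \<and> M' = R + {#meet3 a b, join3 a b#})"

definition coord_sum :: "nat \<times> nat \<times> nat \<Rightarrow> nat" where
  "coord_sum t = fst t + fst (snd t) + snd (snd t)"

lemma coord_sum_meet3_join3:
  "coord_sum (meet3 a b) + coord_sum (join3 a b) = coord_sum a + coord_sum b"
  by (cases a; cases b) (simp add: coord_sum_def)

lemma coord_sum_meet3_less:
  assumes "\<not> a \<le> b" "\<not> b \<le> a"
  shows "coord_sum (meet3 a b) < coord_sum a" "coord_sum (meet3 a b) < coord_sum b"
  using assms by (cases a; cases b; auto simp: coord_sum_def)+

lemma sum_squares_less:
  fixes x y p q :: nat
  assumes "x + y = p + q" "x < p" "x < q"
  shows "p\<^sup>2 + q\<^sup>2 < x\<^sup>2 + y\<^sup>2"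
proof -
  obtain d e where "p = x + d" "q = x + e" "0 < d" "0 < e"
    using assms(2,3) by (metis less_imp_add_positive)
  moreover have "y = x + d + e"
    using assms(1) calculation by simp
  ultimately show ?thesis
    by (simp add: power2_eq_square algebra_simps)
qed

lemma sum_mset_squares_le: "(\<Sum>t\<in>#M. f t ^ 2) \<le> (\<Sum>t\<in>#M. f t :: nat)\<^sup>2"
  by (induction M) (simp_all add: power2_eq_square algebra_simps)

lemma meet_join_step_if_not_chain:
  assumes "\<not> chain_mset M"
  obtains M' where "meet_join_step M M'" "(\<Sum>t\<in>#M'. coord_sum t) = (\<Sum>t\<in>#M. coord_sum t)"
    "(\<Sum>t\<in>#M. coord_sum t ^ 2) < (\<Sum>t\<in>#M'. coord_sum t ^ 2)"
proof -
  obtain a b where ab: "a \<in># M" "b \<in># M" "\<not> a \<le> b" "\<not> b \<le> a"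
    using assms by (auto simp: chain_mset_def)
  then have "b \<in># M - {#a#}"
    by (auto simp: in_diff_count)
  define R where "R = M - {#a#} - {#b#}"
  have M: "M = R + {#a, b#}"
    using insert_DiffM[OF ab(1)] insert_DiffM[OF \<open>b \<in># M - {#a#}\<close>] by (simp add: R_def)
  show ?thesis
  proof (rule that)
    show "meet_join_step M (R + {#meet3 a b, join3 a b#})"
      unfolding meet_join_step_def M by blast
    show "(\<Sum>t\<in>#R + {#meet3 a b, join3 a b#}. coord_sum t) = (\<Sum>t\<in>#M. coord_sum t)"
      using coord_sum_meet3_join3[of a b] by (simp add: M)
    show "(\<Sum>t\<in>#M. coord_sum t ^ 2) < (\<Sum>t\<in>#R + {#meet3 a b, join3 a b#}. coord_sum t ^ 2)"
      using sum_squares_less[OF coord_sum_meet3_join3 coord_sum_meet3_less[OF ab(3,4)]] by (simp add: M)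
  qed
qed

text \<open>The sum of squared coordinate sums increases strictly and is bounded by the square of the
  total coordinate sum, which does not change.\<close>

lemma exists_chain_by_meet_join_steps: "\<exists>C. meet_join_step\<^sup>*\<^sup>* M C \<and> chain_mset C"
proof (induction "(\<Sum>t\<in>#M. coord_sum t)\<^sup>2 - (\<Sum>t\<in>#M. coord_sum t ^ 2)" arbitrary: M rule: less_induct)
  case less
  show ?case
  proof (cases "chain_mset M")
    case False
    then obtain M' where step: "meet_join_step M M'"
      and same_sum: "(\<Sum>t\<in>#M'. coord_sum t) = (\<Sum>t\<in>#M. coord_sum t)"
      and less: "(\<Sum>t\<in>#M. coord_sum t ^ 2) < (\<Sum>t\<in>#M'. coord_sum t ^ 2)"
      by (rule meet_join_step_if_not_chain)
    moreover have "(\<Sum>t\<in>#M'. coord_sum t ^ 2) \<le> (\<Sum>t\<in>#M. coord_sum t)\<^sup>2"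
      using sum_mset_squares_le[of coord_sum M'] unfolding same_sum .
    ultimately have "(\<Sum>t\<in>#M'. coord_sum t)\<^sup>2 - (\<Sum>t\<in>#M'. coord_sum t ^ 2)
        < (\<Sum>t\<in>#M. coord_sum t)\<^sup>2 - (\<Sum>t\<in>#M. coord_sum t ^ 2)"
      unfolding same_sum by (intro diff_less_mono2) auto
    then obtain C where "meet_join_step\<^sup>*\<^sup>* M' C" "chain_mset C"
      using less.hyps by blast
    then show ?thesis
      using step by (blast intro: converse_rtranclp_into_rtranclp)
  qed blast
qed

lemma meet_join_steps_invariant:
  assumes n: "n \<ge> 3" and steps: "meet_join_step\<^sup>*\<^sup>* M C" and M: "set_mset M \<subseteq> triples n"
  shows "set_mset C \<subseteq> triples n \<and> mono_img n C = mono_img n M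
    \<and> Poly_Mapping.single M c - Poly_Mapping.single C c \<in> J_ideal n"
  using steps
proof (induction rule: rtranclp_induct)
  case base
  then show ?case
    using M by (simp add: J_ideal_def ideal_gen.zero)
next
  case (step D E)
  then obtain a b R where D: "D = R + {#a, b#}" and E: "E = R + {#meet3 a b, join3 a b#}"
    by (auto simp: meet_join_step_def)
  have ab: "a \<in> triples n" "b \<in> triples n" and R: "set_mset R \<subseteq> triples n"
    using step.IH by (auto simp: D)
  have E_triples: "set_mset E \<subseteq> triples n"
    using meet3_join3_in_triples[OF ab] R by (simp add: E)
  have E_img: "mono_img n E = mono_img n D"
    unfolding D E by (rule mono_img_meet3_join3[OF n ab, symmetric])
  let ?g = "Var a * Var b - Var (meet3 a b) * Var (join3 a b)"
  have "?g \<in> {Var a * Var b - Var (meet3 a b) * Var (join3 a b) | a b. a \<in> triples n \<and> b \<in> triples n}"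
    using ab by blast
  then have "Poly_Mapping.single R c * ?g \<in> J_ideal n"
    unfolding J_ideal_def by (rule generator_in_ideal_gen[OF single_in_poly_ring[OF R]])
  moreover have "Poly_Mapping.single D c - Poly_Mapping.single E c = Poly_Mapping.single R c * ?g"
    by (simp add: D E Var_def mult_single right_diff_distrib add_mset_commute)
  ultimately have "Poly_Mapping.single D c - Poly_Mapping.single E c \<in> J_ideal n"
    by simp
  then have "(Poly_Mapping.single M c - Poly_Mapping.single D c)
      + (Poly_Mapping.single D c - Poly_Mapping.single E c) \<in> J_ideal n"
    using step.IH unfolding J_ideal_def by (blast intro: ideal_gen_add)
  then show ?case
    using step.IH E_triples E_img by simp
qed

lemma chain_mset_greatest:
  assumes "chain_mset C" "C \<noteq> {#}"
  obtains t where "t \<in># C" "\<forall>x\<in>#C. x \<le> t"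
proof -
  have fin: "finite (coord_sum ` set_mset C)" "coord_sum ` set_mset C \<noteq> {}"
    using assms(2) by auto
  obtain t where t: "t \<in># C" "coord_sum t = Max (coord_sum ` set_mset C)"
    using Max_in[OF fin] by auto
  have greatest: "x \<le> t" if "x \<in># C" for x
  proof -
    have "coord_sum x \<le> coord_sum t"
      using t(2) fin(1) that by simp
    moreover have "x \<le> t \<or> t \<le> x"
      using assms(1) that t(1) by (auto simp: chain_mset_def)
    ultimately show ?thesis
      by (cases x; cases t) (auto simp: coord_sum_def)
  qed
  then show ?thesis
    using t(1) that by blast
qed

lemma greatest_eq_Max_coords:
  assumes "t \<in># C" "\<forall>x\<in>#C. x \<le> t"
  shows "t = (Max (set_mset (image_mset fst C)), Max (set_mset (image_mset (fst \<circ> snd) C)),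
              Max (set_mset (image_mset (snd \<circ> snd) C)))"
proof -
  have Max_eq: "Max (set_mset (image_mset f C)) = f t" if "\<And>x. x \<le> t \<Longrightarrow> f x \<le> f t" for f
    using assms that by (intro Max_eqI) auto
  have "Max (set_mset (image_mset fst C)) = fst t" "Max (set_mset (image_mset (fst \<circ> snd) C)) = (fst \<circ> snd) t"
    "Max (set_mset (image_mset (snd \<circ> snd) C)) = (snd \<circ> snd) t"
    by (rule Max_eq; simp add: less_eq_prod_def)+
  then show ?thesis
    by simp
qed

text \<open>The top element of a chain is its coordinatewise maximum, hence determined by the
  coordinate multisets.\<close>

lemma chain_mset_eqI:
  assumes "chain_mset C1" "chain_mset C2"
    and "image_mset fst C1 = image_mset fst C2" "image_mset (fst \<circ> snd) C1 = image_mset (fst \<circ> snd) C2"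
    "image_mset (snd \<circ> snd) C1 = image_mset (snd \<circ> snd) C2"
  shows "C1 = C2"
  using assms
proof (induction "size C1" arbitrary: C1 C2)
  case 0
  then show ?case
    by (metis size_eq_0_iff_empty image_mset_is_empty_iff)
next
  case (Suc s)
  then have "C1 \<noteq> {#}" "C2 \<noteq> {#}"
    by auto
  then obtain t1 t2 where t1: "t1 \<in># C1" "\<forall>x\<in>#C1. x \<le> t1" and t2: "t2 \<in># C2" "\<forall>x\<in>#C2. x \<le> t2"
    using chain_mset_greatest Suc.prems(1,2) by metis
  have "t1 = t2"
    using greatest_eq_Max_coords[OF t1] greatest_eq_Max_coords[OF t2] Suc.prems(3-5) by simp
  have "C1 - {#t1#} = C2 - {#t1#}"
  proof (rule Suc.hyps)
    show "s = size (C1 - {#t1#})"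
      using Suc.hyps(2) t1(1) by (simp add: size_Diff_singleton)
    show "chain_mset (C1 - {#t1#})" "chain_mset (C2 - {#t1#})"
      using Suc.prems(1,2) unfolding chain_mset_def by (meson in_diffD)+
  qed (use Suc.prems(3-5) t1(1) t2(1) \<open>t1 = t2\<close> in \<open>simp_all add: image_mset_Diff\<close>)
  then show ?case
    using t1(1) t2(1) \<open>t1 = t2\<close> by (metis insert_DiffM)
qed

text \<open>Numbers of strands whose first, second and third leaf is y.\<close>

definition first_leaf_count :: "nat \<Rightarrow> asg \<Rightarrow> nat" where
  "first_leaf_count y w = (if y = 1 then w 1 0 + w 1 1 else w (y - 1) 2)"

definition second_leaf_count :: "nat \<Rightarrow> asg \<Rightarrow> nat" where
  "second_leaf_count y w = w (y - 1) 1"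

definition third_leaf_count :: "nat \<Rightarrow> nat \<Rightarrow> asg \<Rightarrow> nat" where
  "third_leaf_count n y w = (if y = n then w (n - 2) 1 + w (n - 2) 3 else w (y - 1) 5)"

lemma first_leaf_count_wijk:
  assumes n: "n \<ge> 3" and t: "(i, j, k) \<in> triples n"
  shows "first_leaf_count y (wijk n (i, j, k)) = of_bool (i = y)"
  using assms by (auto simp: first_leaf_count_def wijk_def triples_def)

lemma second_leaf_count_wijk:
  assumes n: "n \<ge> 3" and t: "(i, j, k) \<in> triples n"
  shows "second_leaf_count y (wijk n (i, j, k)) = of_bool (j = y)"
  using assms by (auto simp: second_leaf_count_def wijk_def triples_def)

lemma third_leaf_count_wijk:
  assumes n: "n \<ge> 3" and t: "(i, j, k) \<in> triples n"
  shows "third_leaf_count n y (wijk n (i, j, k)) = of_bool (k = y)"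
proof (cases "y = n")
  case True
  have "1 \<le> n - 2"
    using n by simp
  then show ?thesis
    using True n t wijk_inside[of "n - 2" n i j k] by (auto simp: third_leaf_count_def triples_def)
next
  case False
  then show ?thesis
    using t by (auto simp: third_leaf_count_def wijk_def triples_def)
qed

lemma leaf_counts_add_asg:
  "first_leaf_count y (add_asg u v) = first_leaf_count y u + first_leaf_count y v"
  "second_leaf_count y (add_asg u v) = second_leaf_count y u + second_leaf_count y v"
  "third_leaf_count n y (add_asg u v) = third_leaf_count n y u + third_leaf_count n y v"
  by (simp_all add: first_leaf_count_def second_leaf_count_def third_leaf_count_def add_asg_def)

lemma leaf_counts_mono_img:
  assumes n: "n \<ge> 3"
  shows "set_mset C \<subseteq> triples n \<Longrightarrow>
    count (image_mset fst C) y = first_leaf_count y (mono_img n C) \<and>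
    count (image_mset (fst \<circ> snd) C) y = second_leaf_count y (mono_img n C) \<and>
    count (image_mset (snd \<circ> snd) C) y = third_leaf_count n y (mono_img n C)"
proof (induction C)
  case empty
  then show ?case
    by (simp add: mono_img_def first_leaf_count_def second_leaf_count_def third_leaf_count_def)
next
  case (add t C)
  obtain i j k where t: "t = (i, j, k)" "(i, j, k) \<in> triples n"
    using add.prems by (cases t) auto
  have "mono_img n (add_mset t C) = add_asg (wijk n t) (mono_img n C)"
    using wgen_eq_wijk[OF n] t by (simp add: mono_img_def add_asg_def)
  then show ?case
    using add t first_leaf_count_wijk[OF n] second_leaf_count_wijk[OF n] third_leaf_count_wijk[OF n]
    by (simp add: leaf_counts_add_asg)
qed

lemma mono_img_inj_on_chains:
  assumes n: "n \<ge> 3" and chains: "chain_mset C1" "chain_mset C2"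
    and triples: "set_mset C1 \<subseteq> triples n" "set_mset C2 \<subseteq> triples n"
    and img: "mono_img n C1 = mono_img n C2"
  shows "C1 = C2"
  using leaf_counts_mono_img[OF n triples(1)] leaf_counts_mono_img[OF n triples(2)] img
  by (intro chain_mset_eqI[OF chains] multiset_eqI) auto

lemma I_cat_subset_J_ideal:
  assumes n: "n \<ge> 3"
  shows "I_cat n \<subseteq> J_ideal n"
proof
  fix p
  assume "p \<in> I_cat n"
  then have p: "p \<in> poly_ring n" "\<And>u. fiber_sum (mono_img n) u p = 0"
    by (auto simp: I_cat_eq)
  define rep where "rep mo = (SOME C. meet_join_step\<^sup>*\<^sup>* mo C \<and> chain_mset C)" for mo
  have rep: "meet_join_step\<^sup>*\<^sup>* mo (rep mo)" "chain_mset (rep mo)" for mo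
    using someI_ex[OF exists_chain_by_meet_join_steps] by (auto simp: rep_def)
  have inv: "set_mset (rep mo) \<subseteq> triples n \<and> mono_img n (rep mo) = mono_img n mo
      \<and> Poly_Mapping.single mo c - Poly_Mapping.single (rep mo) c \<in> J_ideal n"
    if "mo \<in> Poly_Mapping.keys p" for mo c
    using meet_join_steps_invariant[OF n rep(1)] p(1) that by (auto simp: poly_ring_def)
  show "p \<in> J_ideal n"
  proof (rule fibers_vanish_imp_in[where rep = rep and f = "mono_img n"])
    show "0 \<in> J_ideal n"
      by (simp add: J_ideal_def ideal_gen.zero)
    show "x + y \<in> J_ideal n" if "x \<in> J_ideal n" "y \<in> J_ideal n" for x y
      using that unfolding J_ideal_def by (rule ideal_gen_add)
    show "rep mo = rep mo' \<longleftrightarrow> mono_img n mo = mono_img n mo'"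
      if "mo \<in> Poly_Mapping.keys p" "mo' \<in> Poly_Mapping.keys p" for mo mo'
      using inv[OF that(1)] inv[OF that(2)] mono_img_inj_on_chains[OF n rep(2) rep(2)] by metis
  qed (use inv p(2) in auto)
qed

theorem mainTheorem6:
  fixes n :: nat
  assumes "n \<ge> 3"
  shows "(\<forall>i j k. (i,j,k) \<in> triples n \<longrightarrow>
            (\<exists>!w. w \<in> min_gens (P_cat n) \<and> supp_asg n w = span_edges n i j k))
       \<and> min_gens (P_cat n) = wgen n ` triples n
       \<and> minimal_generating_set (wgen n ` triples n) (P_cat n)
       \<and> I_cat n = J_ideal n"
proof -
  have wgen_image: "wgen n ` triples n = wijk n ` triples n"
    using wgen_eq_wijk[OF assms] by (rule image_cong[OF refl])
  have generators_minimal: "wijk n ` triples n \<subseteq> min_gens (P_cat n)"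
    using wijk_min_gen[OF assms] by auto
  show ?thesis
    unfolding wgen_image
  proof (intro conjI allI impI)
    fix i j k
    assume "(i, j, k) \<in> triples n"
    then show "\<exists>!w. w \<in> min_gens (P_cat n) \<and> supp_asg n w = span_edges n i j k"
      using min_gen_with_span_edges[OF assms] by auto
  next
    show "min_gens (P_cat n) = wijk n ` triples n"
      by (rule min_gens_P_cat[OF assms])
    show "minimal_generating_set (wijk n ` triples n) (P_cat n)"
      by (rule minimal_generating_setI[OF P_cat_eq_closure[OF assms, symmetric] generators_minimal])
    show "I_cat n = J_ideal n"
      using I_cat_subset_J_ideal[OF assms] J_ideal_subset_I_cat[OF assms] by blast
  qed
qed

end
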